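(* Let $K$ be an algebraically closed field of characteristic $0$, let $\mathcal{L}$ be a line of type $(1,1,0)$ in $\mathbb{P}^1\times\mathbb{P}^1\times\mathbb{P}^1$ over $K$, and let $X$ be a finite set of distinct points with $X\subseteq\mathcal{L}$ and $|X|=s$. Then $H_X(i,j,k)=\min\{k+1,s\}$ for all $(i,j,k)\in\mathbb{N}^3$.
   Context: Let $R=K[x_0,x_1,y_0,y_1,z_0,z_1]$ be $\mathbb{N}^3$-graded with $\deg x_i=(1,0,0)$, $\deg y_i=(0,1,0)$, $\deg z_i=(0,0,1)$. For a point $P=[a_0:a_1]\times[b_0:b_1]\times[c_0:c_1]$, $I(P)=(a_1x_0-a_0x_1,\,b_1y_0-b_0y_1,\,c_1z_0-c_0z_1)$, and for $X=\{P_1,\dots,P_s\}$, $I(X)=\bigcap_i I(P_i)$. The Hilbert function is $H_X(i,j,k)=\dim_K R_{i,j,k}-\dim_K I(X)_{i,j,k}$. A line of type $(1,1,0)$ is the subvariety defined by an ideal $(L,L')$ with $L\in R_{1,0,0}$, $L'\in R_{0,1,0}$ nonzero. *)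

theory Defs
  imports "HOL-Library.Poly_Mapping" "HOL-Computational_Algebra.Polynomial"
begin

datatype var = X0 | X1 | Y0 | Y1 | Z0 | Z1

type_synonym 'k mpoly = "(var \<Rightarrow>\<^sub>0 nat) \<Rightarrow>\<^sub>0 'k"

definition Var :: "var \<Rightarrow> 'k::comm_ring_1 mpoly" where
  "Var v = Poly_Mapping.single (Poly_Mapping.single v 1) 1"

definition Const :: "'k::comm_ring_1 \<Rightarrow> 'k mpoly" where
  "Const c = Poly_Mapping.single 0 c"

definition mscale :: "'k::comm_ring_1 \<Rightarrow> 'k mpoly \<Rightarrow> 'k mpoly" where
  "mscale c p = Poly_Mapping.map (\<lambda>a. c * a) p"

definition tdeg :: "(var \<Rightarrow>\<^sub>0 nat) \<Rightarrow> nat \<times> nat \<times> nat" where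
  "tdeg m = (Poly_Mapping.lookup m X0 + Poly_Mapping.lookup m X1, Poly_Mapping.lookup m Y0 + Poly_Mapping.lookup m Y1, Poly_Mapping.lookup m Z0 + Poly_Mapping.lookup m Z1)"

definition Rdeg :: "nat \<Rightarrow> nat \<Rightarrow> nat \<Rightarrow> 'k::comm_ring_1 mpoly set" where
  "Rdeg i j k = {p. \<forall>m \<in> Poly_Mapping.keys p. tdeg m = (i, j, k)}"

text \<open>A point of P1 x P1 x P1, given by representatives ((a0,a1),(b0,b1),(c0,c1)),
  each pair nonzero.\<close>
type_synonym 'k pt = "('k \<times> 'k) \<times> ('k \<times> 'k) \<times> ('k \<times> 'k)"

definition valid_pt :: "'k::field pt \<Rightarrow> bool" where
  "valid_pt P = (case P of ((a0,a1),(b0,b1),(c0,c1)) \<Rightarrow>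
     (a0,a1) \<noteq> (0,0) \<and> (b0,b1) \<noteq> (0,0) \<and> (c0,c1) \<noteq> (0,0))"

definition same_pt :: "'k::field pt \<Rightarrow> 'k pt \<Rightarrow> bool" where
  "same_pt P Q = (case P of ((a0,a1),(b0,b1),(c0,c1)) \<Rightarrow> case Q of ((a0',a1'),(b0',b1'),(c0',c1')) \<Rightarrow>
     a0 * a1' = a1 * a0' \<and> b0 * b1' = b1 * b0' \<and> c0 * c1' = c1 * c0')"

definition coord :: "'k pt \<Rightarrow> var \<Rightarrow> 'k" where
  "coord P v = (case P of ((a0,a1),(b0,b1),(c0,c1)) \<Rightarrow>
     (case v of X0 \<Rightarrow> a0 | X1 \<Rightarrow> a1 | Y0 \<Rightarrow> b0 | Y1 \<Rightarrow> b1 | Z0 \<Rightarrow> c0 | Z1 \<Rightarrow> c1))"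

definition eval_at :: "'k::comm_ring_1 mpoly \<Rightarrow> 'k pt \<Rightarrow> 'k" where
  "eval_at p P = (\<Sum>m \<in> Poly_Mapping.keys p. Poly_Mapping.lookup p m * (\<Prod>v \<in> Poly_Mapping.keys m. coord P v ^ Poly_Mapping.lookup m v))"

definition ideal_pt :: "'k::field pt \<Rightarrow> 'k mpoly set" where
  "ideal_pt P = (case P of ((a0,a1),(b0,b1),(c0,c1)) \<Rightarrow>
     {g1 * (Const a1 * Var X0 - Const a0 * Var X1)
      + g2 * (Const b1 * Var Y0 - Const b0 * Var Y1)
      + g3 * (Const c1 * Var Z0 - Const c0 * Var Z1) | g1 g2 g3. True})"

definition ideal_pts :: "'k::field pt set \<Rightarrow> 'k mpoly set" where
  "ideal_pts X = {p. \<forall>P \<in> X. p \<in> ideal_pt P}"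

definition hilb :: "'k::field pt set \<Rightarrow> nat \<Rightarrow> nat \<Rightarrow> nat \<Rightarrow> nat" where
  "hilb X i j k = vector_space.dim mscale (Rdeg i j k :: 'k mpoly set)
                  - vector_space.dim mscale (ideal_pts X \<inter> Rdeg i j k)"

definition line110 :: "'k::field mpoly \<Rightarrow> 'k mpoly \<Rightarrow> bool" where
  "line110 L L' = (L \<in> Rdeg 1 0 0 \<and> L \<noteq> 0 \<and> L' \<in> Rdeg 0 1 0 \<and> L' \<noteq> 0)"

definition on_line :: "'k::field mpoly \<Rightarrow> 'k mpoly \<Rightarrow> 'k pt \<Rightarrow> bool" where
  "on_line L L' P = (eval_at L P = 0 \<and> eval_at L' P = 0)"

end

theory Submission
  imports Defs "HOL-Library.FuncSet"
begin

text \<open>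
  Modulo the ideal of a point \<open>P\<close>, every variable is a scalar multiple of a variable of the same
  factor that does not vanish at \<open>P\<close>; so a form of degree \<open>(i, j, k)\<close> lies in \<open>I(P)\<close> iff it
  vanishes at \<open>P\<close>, and \<open>H\<^sub>X(i, j, k)\<close> is the rank of evaluation at the points of \<open>X\<close>.

  The points of \<open>X\<close> on a line of type \<open>(1,1,0)\<close> share their coordinates in the first two factors.
  Choosing \<open>\<lambda>\<close> with \<open>c\<^sub>1 + \<lambda> c\<^sub>0 \<noteq> 0\<close> on \<open>X\<close>, every form of degree \<open>(i, j, k)\<close> restricts to \<open>X\<close> as a
  nonzero weight times a polynomial of degree \<open>\<le> k\<close> in \<open>\<tau> = c\<^sub>0 / (c\<^sub>1 + \<lambda> c\<^sub>0)\<close>, and \<open>\<tau>\<close> separates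
  the points of \<open>X\<close>. The forms \<open>x\<^sup>i y\<^sup>j z\<^sub>0\<^sup>g (z\<^sub>1 + \<lambda> z\<^sub>0)\<^sup>k\<^sup>-\<^sup>g\<close>, which restrict to the weight
  times \<open>\<tau>\<^sup>g\<close>, span \<open>R\<^sub>i\<^sub>,\<^sub>j\<^sub>,\<^sub>k\<close> modulo \<open>I(X)\<close> for \<open>g < min (k + 1) s\<close> (interpolation modulo
  \<open>\<Prod>(t - \<tau>(P))\<close>) and are independent modulo \<open>I(X)\<close> (a nonzero polynomial of degree \<open>< s\<close> has fewer
  than \<open>s\<close> roots).
\<close>

lemma UNIV_var: "(UNIV :: var set) = {X0, X1, Y0, Y1, Z0, Z1}"
  using var.exhaust by auto

instance var :: finite
  by standard (simp add: UNIV_var)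

lemma Const_mult: "Const a * Const b = Const (a * b)"
  unfolding Const_def by (simp add: mult_single)

lemma Const_add: "Const a + Const b = Const (a + b)"
  unfolding Const_def by (simp add: single_add)

lemma Const_one: "Const 1 = 1"
  unfolding Const_def by simp

lemma Const_zero: "Const 0 = 0"
  unfolding Const_def by simp

lemma Const_uminus: "Const (- a) = - Const a"
  unfolding Const_def by (simp add: single_uminus)

lemma Const_power: "Const a ^ n = Const (a ^ n)"
  by (induction n) (simp_all add: Const_one Const_mult)

lemma Const_sum: "Const (\<Sum>x\<in>A. f x) = (\<Sum>x\<in>A. Const (f x))"
  by (induction A rule: infinite_finite_induct) (simp_all add: Const_zero flip: Const_add)

lemma Const_prod: "Const (\<Prod>x\<in>A. f x) = (\<Prod>x\<in>A. Const (f x))"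
  by (induction A rule: infinite_finite_induct) (simp_all add: Const_one flip: Const_mult)

lemma Const_mult_single: "Const c * Poly_Mapping.single m 1 = Poly_Mapping.single m c"
  by (simp add: Const_def mult_single)

lemma mscale_eq_Const_mult: "mscale c p = Const c * p"
  unfolding mscale_def Const_def by (rule mult_map_scale_conv_mult)

interpretation mpoly: vector_space "mscale :: 'k::field \<Rightarrow> 'k mpoly \<Rightarrow> 'k mpoly"
  by unfold_locales
    (simp_all add: mscale_eq_Const_mult algebra_simps Const_mult Const_one flip: Const_add)

lemma mpoly_eq_sum_singles:
  "p = (\<Sum>m\<in>Poly_Mapping.keys p. Poly_Mapping.single m (Poly_Mapping.lookup p m))"
  by (rule poly_mapping_eqI)
    (simp add: lookup_sum lookup_single when_def in_keys_iff sum.delta' cong: if_cong)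

lemma Var_power: "Var v ^ n = Poly_Mapping.single (Poly_Mapping.single v n) 1"
proof (induction n)
  case (Suc n)
  have "Poly_Mapping.single v (Suc n) = Poly_Mapping.single v 1 + Poly_Mapping.single v n"
    by (simp flip: single_add)
  with Suc show ?case by (simp add: Var_def mult_single)
qed (simp add: Var_def)

lemma monomial_eq_sum_singles:
  "(m :: var \<Rightarrow>\<^sub>0 nat) = (\<Sum>v\<in>UNIV. Poly_Mapping.single v (Poly_Mapping.lookup m v))"
  by (rule poly_mapping_eqI) (simp add: lookup_sum lookup_single when_def eq_commute[of _ "_::var"])

lemma prod_single_one:
  "(\<Prod>x\<in>A. Poly_Mapping.single (f x) (1::'k::comm_ring_1)) = Poly_Mapping.single (\<Sum>x\<in>A. f x) 1"
  by (induction A rule: infinite_finite_induct) (simp_all add: mult_single)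

lemma monomial_eq_prod_Var:
  "Poly_Mapping.single m (1::'k::comm_ring_1) = (\<Prod>v\<in>UNIV. Var v ^ Poly_Mapping.lookup m v)"
  by (simp add: Var_power prod_single_one flip: monomial_eq_sum_singles)

definition monomial_value :: "'k::comm_ring_1 pt \<Rightarrow> (var \<Rightarrow>\<^sub>0 nat) \<Rightarrow> 'k" where
  "monomial_value P m = (\<Prod>v\<in>UNIV. coord P v ^ Poly_Mapping.lookup m v)"

lemma eval_at_eq_monomial_value:
  "eval_at p P = (\<Sum>m\<in>Poly_Mapping.keys p. Poly_Mapping.lookup p m * monomial_value P m)"
proof -
  have "(\<Prod>v\<in>Poly_Mapping.keys m. coord P v ^ Poly_Mapping.lookup m v) = monomial_value P m" for m
    unfolding monomial_value_def by (rule prod.mono_neutral_left) (auto simp: in_keys_iff)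
  then show ?thesis by (simp add: eval_at_def)
qed

lemma monomial_value_add: "monomial_value P (a + b) = monomial_value P a * monomial_value P b"
  by (simp add: monomial_value_def lookup_add power_add prod.distrib)

lemma eval_at_superset:
  assumes "finite S" "Poly_Mapping.keys p \<subseteq> S"
  shows "eval_at p P = (\<Sum>m\<in>S. Poly_Mapping.lookup p m * monomial_value P m)"
  unfolding eval_at_eq_monomial_value
  by (rule sum.mono_neutral_left) (use assms in \<open>auto simp: in_keys_iff\<close>)

lemma eval_at_single: "eval_at (Poly_Mapping.single m c) P = c * monomial_value P m"
  by (subst eval_at_superset[where S = "{m}"]) auto

lemma eval_at_add: "eval_at (p + q) P = eval_at p P + eval_at q P"
proof -
  let ?S = "Poly_Mapping.keys p \<union> Poly_Mapping.keys q"
  have "eval_at (p + q) P = (\<Sum>m\<in>?S. Poly_Mapping.lookup (p + q) m * monomial_value P m)"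
    by (rule eval_at_superset) (auto simp: keys_add)
  also have "\<dots> = (\<Sum>m\<in>?S. Poly_Mapping.lookup p m * monomial_value P m)
      + (\<Sum>m\<in>?S. Poly_Mapping.lookup q m * monomial_value P m)"
    by (simp add: lookup_add distrib_right sum.distrib)
  also have "\<dots> = eval_at p P + eval_at q P"
    by (simp add: eval_at_superset[symmetric])
  finally show ?thesis .
qed

lemma eval_at_zero [simp]: "eval_at 0 P = 0"
  by (simp add: eval_at_def)

lemma eval_at_sum: "eval_at (\<Sum>x\<in>A. f x) P = (\<Sum>x\<in>A. eval_at (f x) P)"
  by (induction A rule: infinite_finite_induct) (auto simp: eval_at_add)

lemma eval_at_mult: "eval_at (p * q) P = eval_at p P * eval_at q P"
proof -
  have "p * q = (\<Sum>a\<in>Poly_Mapping.keys p. \<Sum>b\<in>Poly_Mapping.keys q.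
      Poly_Mapping.single (a + b) (Poly_Mapping.lookup p a * Poly_Mapping.lookup q b))"
    by (subst mpoly_eq_sum_singles[of p], subst mpoly_eq_sum_singles[of q])
      (simp add: sum_distrib_left sum_distrib_right mult_single, rule sum.swap)
  then have "eval_at (p * q) P = (\<Sum>a\<in>Poly_Mapping.keys p. \<Sum>b\<in>Poly_Mapping.keys q.
      (Poly_Mapping.lookup p a * monomial_value P a) * (Poly_Mapping.lookup q b * monomial_value P b))"
    by (simp add: eval_at_sum eval_at_single monomial_value_add algebra_simps)
  then show ?thesis
    by (simp add: eval_at_eq_monomial_value sum_product)
qed

lemma eval_at_uminus: "eval_at (- p) P = - eval_at p P"
  using eval_at_add[of p "- p" P] by (simp add: minus_unique)

lemma eval_at_diff: "eval_at (p - q) P = eval_at p P - eval_at q P"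
  using eval_at_add[of p "- q" P] by (simp add: eval_at_uminus)

lemma eval_at_power: "eval_at (p ^ n) P = eval_at p P ^ n"
  by (induction n) (simp_all add: eval_at_mult eval_at_single monomial_value_def flip: single_one)

lemma eval_at_Const [simp]: "eval_at (Const c) P = c"
  by (simp add: Const_def eval_at_single monomial_value_def)

lemma monomial_value_single_var: "monomial_value P (Poly_Mapping.single v n) = coord P v ^ n"
proof -
  have "coord P w ^ Poly_Mapping.lookup (Poly_Mapping.single v n) w
      = (if w = v then coord P v ^ n else 1)" for w
    by (simp add: lookup_single when_def)
  then show ?thesis by (simp add: monomial_value_def)
qed

lemma eval_at_Var [simp]: "eval_at (Var v) P = coord P v"
  by (simp add: Var_def eval_at_single monomial_value_single_var)

lemma eval_at_mscale: "eval_at (mscale c p) P = c * eval_at p P"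
  by (simp add: mscale_eq_Const_mult eval_at_mult)

subsection \<open>The ideal of a point\<close>

definition coord_form :: "'k::comm_ring_1 pt \<Rightarrow> var \<Rightarrow> var \<Rightarrow> 'k mpoly" where
  "coord_form P u w = Const (coord P w) * Var u - Const (coord P u) * Var w"

lemma ideal_pt_eq:
  "ideal_pt P = {g1 * coord_form P X0 X1 + g2 * coord_form P Y0 Y1 + g3 * coord_form P Z0 Z1
    | g1 g2 g3. True}"
  by (cases P) (auto simp: ideal_pt_def coord_form_def coord_def)

lemma ideal_ptI:
  "g1 * coord_form P X0 X1 + g2 * coord_form P Y0 Y1 + g3 * coord_form P Z0 Z1 \<in> ideal_pt P"
  unfolding ideal_pt_eq by blast

lemma ideal_ptE:
  assumes "p \<in> ideal_pt P"
  obtains g1 g2 g3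
  where "p = g1 * coord_form P X0 X1 + g2 * coord_form P Y0 Y1 + g3 * coord_form P Z0 Z1"
  using assms unfolding ideal_pt_eq by blast

lemma ideal_pt_add: "p \<in> ideal_pt P \<Longrightarrow> q \<in> ideal_pt P \<Longrightarrow> p + q \<in> ideal_pt P"
proof (elim ideal_ptE)
  fix g1 g2 g3 h1 h2 h3
  assume "p = g1 * coord_form P X0 X1 + g2 * coord_form P Y0 Y1 + g3 * coord_form P Z0 Z1"
    and "q = h1 * coord_form P X0 X1 + h2 * coord_form P Y0 Y1 + h3 * coord_form P Z0 Z1"
  then have "p + q = (g1 + h1) * coord_form P X0 X1 + (g2 + h2) * coord_form P Y0 Y1
      + (g3 + h3) * coord_form P Z0 Z1"
    by (simp add: algebra_simps)
  then show "p + q \<in> ideal_pt P" by (simp add: ideal_ptI)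
qed

lemma ideal_pt_mult_left: "p \<in> ideal_pt P \<Longrightarrow> r * p \<in> ideal_pt P"
proof (elim ideal_ptE)
  fix g1 g2 g3
  assume "p = g1 * coord_form P X0 X1 + g2 * coord_form P Y0 Y1 + g3 * coord_form P Z0 Z1"
  then have "r * p = (r * g1) * coord_form P X0 X1 + (r * g2) * coord_form P Y0 Y1
      + (r * g3) * coord_form P Z0 Z1"
    by (simp add: algebra_simps)
  then show "r * p \<in> ideal_pt P" by (simp add: ideal_ptI)
qed

lemma ideal_pt_zero: "0 \<in> ideal_pt P"
  using ideal_ptI[of 0 P 0 0] by simp

lemma ideal_pt_sum: "(\<And>x. x \<in> A \<Longrightarrow> f x \<in> ideal_pt P) \<Longrightarrow> (\<Sum>x\<in>A. f x) \<in> ideal_pt P"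
  by (induction A rule: infinite_finite_induct) (auto simp: ideal_pt_zero ideal_pt_add)

lemma coord_form_in_ideal_pt:
  "coord_form P X0 X1 \<in> ideal_pt P" "coord_form P Y0 Y1 \<in> ideal_pt P"
  "coord_form P Z0 Z1 \<in> ideal_pt P"
  using ideal_ptI[of 1 P 0 0] ideal_ptI[of 0 P 1 0] ideal_ptI[of 0 P 0 1] by simp_all

lemma eval_at_coord_form [simp]: "eval_at (coord_form P u w) P = 0"
  by (simp add: coord_form_def eval_at_diff eval_at_mult mult.commute)

lemma eval_at_ideal_pt: "p \<in> ideal_pt P \<Longrightarrow> eval_at p P = 0"
  by (elim ideal_ptE) (simp add: eval_at_add eval_at_mult)

definition pt_cong :: "'k::field pt \<Rightarrow> 'k mpoly \<Rightarrow> 'k mpoly \<Rightarrow> bool" where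
  "pt_cong P p q \<longleftrightarrow> p - q \<in> ideal_pt P"

lemma pt_cong_mult: "pt_cong P a a' \<Longrightarrow> pt_cong P b b' \<Longrightarrow> pt_cong P (a * b) (a' * b')"
proof -
  assume "pt_cong P a a'" "pt_cong P b b'"
  then have "b * (a - a') + a' * (b - b') \<in> ideal_pt P"
    unfolding pt_cong_def by (intro ideal_pt_add ideal_pt_mult_left)
  then show ?thesis unfolding pt_cong_def by (simp add: algebra_simps)
qed

lemma pt_cong_refl: "pt_cong P a a"
  by (simp add: pt_cong_def ideal_pt_zero)

lemma pt_cong_power: "pt_cong P a a' \<Longrightarrow> pt_cong P (a ^ n) (a' ^ n)"
  by (induction n) (simp_all add: pt_cong_refl pt_cong_mult)

lemma pt_cong_prod:
  "(\<And>x. x \<in> A \<Longrightarrow> pt_cong P (f x) (g x)) \<Longrightarrow> pt_cong P (\<Prod>x\<in>A. f x) (\<Prod>x\<in>A. g x)"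
  by (induction A rule: infinite_finite_induct) (simp_all add: pt_cong_refl pt_cong_mult)

lemma Var_cong_coord_form:
  fixes P :: "'k::field pt"
  assumes "coord_form P u w \<in> ideal_pt P" "v \<in> {u, w}" "e \<in> {u, w}" "coord P e \<noteq> 0"
  shows "pt_cong P (Var v) (Const (coord P v / coord P e) * Var e)"
proof (cases "v = e")
  case True
  then show ?thesis using assms(4) by (simp add: Const_one pt_cong_refl)
next
  case False
  then have "Var v - Const (coord P v / coord P e) * Var e
      = Const ((if v = u then 1 else - 1) / coord P e) * coord_form P u w"
    using assms(2-4)
    by (auto simp: coord_form_def right_diff_distrib mult.assoc[symmetric] Const_mult Const_one
        Const_uminus)
  then show ?thesis
    using ideal_pt_mult_left[OF assms(1)] unfolding pt_cong_def by metis
qed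

definition pivot :: "'k::zero pt \<Rightarrow> var \<Rightarrow> var" where
  "pivot P v =
    (if v \<in> {X0, X1} then (if coord P X0 \<noteq> 0 then X0 else X1)
     else if v \<in> {Y0, Y1} then (if coord P Y0 \<noteq> 0 then Y0 else Y1)
     else (if coord P Z0 \<noteq> 0 then Z0 else Z1))"

lemma pivot_same_group: "pivot P X1 = pivot P X0" "pivot P Y1 = pivot P Y0" "pivot P Z1 = pivot P Z0"
  by (simp_all add: pivot_def)

lemma valid_pt_coord:
  "valid_pt P \<Longrightarrow> (coord P X0 \<noteq> 0 \<or> coord P X1 \<noteq> 0) \<and> (coord P Y0 \<noteq> 0 \<or> coord P Y1 \<noteq> 0)
    \<and> (coord P Z0 \<noteq> 0 \<or> coord P Z1 \<noteq> 0)"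
  by (cases P) (auto simp: valid_pt_def coord_def)

lemma coord_pivot_nonzero: "valid_pt P \<Longrightarrow> coord P (pivot P v) \<noteq> 0"
  using valid_pt_coord[of P] by (auto simp: pivot_def)

lemma Var_cong_pivot:
  fixes P :: "'k::field pt"
  assumes "valid_pt P"
  shows "pt_cong P (Var v) (Const (coord P v / coord P (pivot P v)) * Var (pivot P v))"
proof -
  have nonzero: "coord P (pivot P v) \<noteq> 0"
    by (rule coord_pivot_nonzero[OF assms])
  consider "v \<in> {X0, X1}" | "v \<in> {Y0, Y1}" | "v \<in> {Z0, Z1}"
    by (cases v) auto
  then show ?thesis
  proof cases
    case 1
    then show ?thesis
      by (intro Var_cong_coord_form[OF coord_form_in_ideal_pt(1) _ _ nonzero]) (auto simp: pivot_def)
  next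
    case 2
    then show ?thesis
      by (intro Var_cong_coord_form[OF coord_form_in_ideal_pt(2) _ _ nonzero]) (auto simp: pivot_def)
  next
    case 3
    then show ?thesis
      by (intro Var_cong_coord_form[OF coord_form_in_ideal_pt(3) _ _ nonzero]) (auto simp: pivot_def)
  qed
qed

definition pivot_monomial :: "'k::field pt \<Rightarrow> nat \<Rightarrow> nat \<Rightarrow> nat \<Rightarrow> 'k mpoly" where
  "pivot_monomial P i j k = Var (pivot P X0) ^ i * Var (pivot P Y0) ^ j * Var (pivot P Z0) ^ k"

lemma monomial_cong_pivot_monomial:
  fixes P :: "'k::field pt"
  assumes "valid_pt P" "tdeg m = (i, j, k)"
  shows "\<exists>c. pt_cong P (Poly_Mapping.single m 1) (Const c * pivot_monomial P i j k)"
proof -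
  let ?l = "Poly_Mapping.lookup m"
  define r where "r v = coord P v / coord P (pivot P v)" for v
  have "pt_cong P (Poly_Mapping.single m 1) (\<Prod>v\<in>UNIV. (Const (r v) * Var (pivot P v)) ^ ?l v)"
    unfolding monomial_eq_prod_Var r_def by (intro pt_cong_prod pt_cong_power Var_cong_pivot assms(1))
  also have "(\<Prod>v\<in>UNIV. (Const (r v) * Var (pivot P v)) ^ ?l v)
      = Const (\<Prod>v\<in>UNIV. r v ^ ?l v) * (\<Prod>v\<in>UNIV. Var (pivot P v) ^ ?l v)"
    by (simp add: power_mult_distrib prod.distrib Const_power flip: Const_prod)
  also have "(\<Prod>v\<in>UNIV. Var (pivot P v) ^ ?l v) = Var (pivot P X0) ^ (?l X0 + ?l X1)
      * Var (pivot P Y0) ^ (?l Y0 + ?l Y1) * Var (pivot P Z0) ^ (?l Z0 + ?l Z1)"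
    by (simp add: UNIV_var pivot_same_group power_add mult_ac)
  also have "\<dots> = pivot_monomial P i j k"
    using assms(2) by (simp add: pivot_monomial_def tdeg_def)
  finally show ?thesis by blast
qed

lemma ideal_pt_iff_eval_at_zero:
  fixes P :: "'k::field pt"
  assumes "valid_pt P" "p \<in> Rdeg i j k"
  shows "p \<in> ideal_pt P \<longleftrightarrow> eval_at p P = 0"
proof
  assume "eval_at p P = 0"
  let ?g = "pivot_monomial P i j k"
  let ?K = "Poly_Mapping.keys p" and ?l = "Poly_Mapping.lookup p"
  have "\<forall>m\<in>?K. \<exists>c. pt_cong P (Poly_Mapping.single m 1) (Const c * ?g)"
    using assms(2) unfolding Rdeg_def by (blast intro: monomial_cong_pivot_monomial[OF assms(1)])
  then obtain c where c: "\<And>m. m \<in> ?K \<Longrightarrow> pt_cong P (Poly_Mapping.single m 1) (Const (c m) * ?g)"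
    by metis
  define a where "a = (\<Sum>m\<in>?K. ?l m * c m)"
  have "p - Const a * ?g = (\<Sum>m\<in>?K. Const (?l m) * (Poly_Mapping.single m 1 - Const (c m) * ?g))"
    by (subst (1) mpoly_eq_sum_singles)
      (simp add: a_def Const_sum Const_mult_single right_diff_distrib sum_subtractf
        sum_distrib_right mult.assoc flip: Const_mult)
  also have "\<dots> \<in> ideal_pt P"
    using c by (intro ideal_pt_sum ideal_pt_mult_left) (simp add: pt_cong_def)
  finally have p: "p - Const a * ?g \<in> ideal_pt P" .
  with \<open>eval_at p P = 0\<close> have "a * eval_at ?g P = 0"
    by (auto dest: eval_at_ideal_pt simp: eval_at_diff eval_at_mult)
  moreover have "eval_at ?g P \<noteq> 0"
    by (simp add: pivot_monomial_def eval_at_mult eval_at_power coord_pivot_nonzero assms(1))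
  ultimately show "p \<in> ideal_pt P"
    using p by (simp add: Const_zero)
qed (rule eval_at_ideal_pt)

lemma Rdeg_zero: "0 \<in> Rdeg i j k"
  by (simp add: Rdeg_def)

lemma Rdeg_add: "p \<in> Rdeg i j k \<Longrightarrow> q \<in> Rdeg i j k \<Longrightarrow> p + q \<in> Rdeg i j k"
  using keys_add[of p q] by (auto simp: Rdeg_def)

lemma Rdeg_mscale: "p \<in> Rdeg i j k \<Longrightarrow> mscale c p \<in> Rdeg i j k"
  by (auto simp: Rdeg_def mscale_def in_keys_iff Poly_Mapping.map.rep_eq when_def)

lemma subspace_Rdeg: "mpoly.subspace (Rdeg i j k)"
  by (rule mpoly.subspaceI) (auto intro: Rdeg_add Rdeg_zero Rdeg_mscale)

lemma Rdeg_mult: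
  assumes "p \<in> Rdeg i1 j1 k1" "q \<in> Rdeg i2 j2 k2"
  shows "p * q \<in> Rdeg (i1 + i2) (j1 + j2) (k1 + k2)"
  using keys_mult[of p q] assms by (fastforce simp: Rdeg_def tdeg_def lookup_add)

lemma Rdeg_one: "1 \<in> Rdeg 0 0 0"
  by (auto simp: Rdeg_def tdeg_def simp flip: single_one)

lemma Rdeg_power: "p \<in> Rdeg i j k \<Longrightarrow> p ^ n \<in> Rdeg (n * i) (n * j) (n * k)"
  by (induction n) (auto simp: Rdeg_one dest: Rdeg_mult)

lemma Rdeg_Var:
  "Var X0 \<in> Rdeg 1 0 0" "Var X1 \<in> Rdeg 1 0 0" "Var Y0 \<in> Rdeg 0 1 0"
  "Var Y1 \<in> Rdeg 0 1 0" "Var Z0 \<in> Rdeg 0 0 1" "Var Z1 \<in> Rdeg 0 0 1"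
  by (auto simp: Rdeg_def Var_def tdeg_def lookup_single)

lemma finite_tdeg: "finite {m. tdeg m = (i, j, k)}"
proof -
  let ?B = "Pi UNIV (\<lambda>_ :: var. {..i + j + k})"
  have "finite ?B"
    using finite_PiE[of UNIV "\<lambda>_ :: var. {..i + j + k}"] by (simp add: PiE_UNIV_domain)
  then have "finite (Poly_Mapping.lookup -` ?B)"
    by (rule finite_vimageI) (simp add: inj_def poly_mapping_eqI)
  moreover have "{m. tdeg m = (i, j, k)} \<subseteq> Poly_Mapping.lookup -` ?B"
  proof
    fix m assume "m \<in> {m. tdeg m = (i, j, k)}"
    then have "Poly_Mapping.lookup m v \<le> i + j + k" for v
      by (cases v) (auto simp: tdeg_def)
    then show "m \<in> Poly_Mapping.lookup -` ?B" by auto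
  qed
  ultimately show ?thesis by (rule finite_subset[rotated])
qed

lemma Rdeg_subset_span_monomials:
  "Rdeg i j k \<subseteq> mpoly.span ((\<lambda>m. Poly_Mapping.single m (1 :: 'k :: field)) ` {m. tdeg m = (i, j, k)})"
proof
  fix p :: "'k mpoly"
  assume p: "p \<in> Rdeg i j k"
  have "p = (\<Sum>m\<in>Poly_Mapping.keys p. mscale (Poly_Mapping.lookup p m) (Poly_Mapping.single m 1))"
    by (subst mpoly_eq_sum_singles) (simp add: mscale_eq_Const_mult Const_mult_single)
  also have "\<dots> \<in> mpoly.span ((\<lambda>m. Poly_Mapping.single m 1) ` {m. tdeg m = (i, j, k)})"
    using p by (intro mpoly.span_sum mpoly.span_scale mpoly.span_base) (auto simp: Rdeg_def)
  finally show "p \<in> mpoly.span ((\<lambda>m. Poly_Mapping.single m 1) ` {m. tdeg m = (i, j, k)})" .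
qed

lemma finite_dimensional_Rdeg: "\<exists>F. finite F \<and> Rdeg i j k \<subseteq> mpoly.span (F :: 'k :: field mpoly set)"
  by (rule exI[of _ "(\<lambda>m. Poly_Mapping.single m 1) ` {m. tdeg m = (i, j, k)}"])
    (simp add: finite_tdeg Rdeg_subset_span_monomials)

lemma subspace_ideal_pts: "mpoly.subspace (ideal_pts X)"
  by (rule mpoly.subspaceI)
    (auto simp: ideal_pts_def mscale_eq_Const_mult ideal_pt_zero ideal_pt_add ideal_pt_mult_left)

lemma ideal_pts_Rdeg_iff:
  assumes "\<forall>P\<in>X. valid_pt P" "p \<in> Rdeg i j k"
  shows "p \<in> ideal_pts X \<longleftrightarrow> (\<forall>P\<in>X. eval_at p P = 0)"
  using assms by (auto simp: ideal_pts_def ideal_pt_iff_eval_at_zero)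

subsection \<open>Codimension of a subspace\<close>

lemma (in vector_space) independent_Un_independent_mod:
  assumes sW: "subspace W" and BW: "B \<subseteq> W" and iB: "independent B" and fB: "finite B"
    and fT: "finite T" and ind: "\<And>c. (\<Sum>x\<in>T. c x *s x) \<in> W \<Longrightarrow> \<forall>x\<in>T. c x = 0"
  shows "B \<inter> T = {}" and "independent (B \<union> T)"
proof -
  show disj: "B \<inter> T = {}"
  proof (rule ccontr)
    assume "B \<inter> T \<noteq> {}"
    then obtain x where x: "x \<in> B" "x \<in> T" by blast
    have "(\<Sum>y\<in>T. (if y = x then 1 else 0) *s y) = x"
      using fT x(2) by (simp add: if_distrib[of "\<lambda>c. c *s _"] sum.delta' cong: if_cong)
    with x BW have "(\<Sum>y\<in>T. (if y = x then 1 else 0) *s y) \<in> W" by auto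
    from ind[OF this] x(2) show False by auto
  qed
  show "independent (B \<union> T)"
  proof (rule independent_if_scalars_zero)
    show "finite (B \<union> T)" using fB fT by simp
  next
    fix f x assume sum0: "(\<Sum>x\<in>B \<union> T. f x *s x) = 0" and x: "x \<in> B \<union> T"
    have split: "(\<Sum>x\<in>B \<union> T. f x *s x) = (\<Sum>x\<in>B. f x *s x) + (\<Sum>x\<in>T. f x *s x)"
      using fB fT disj by (simp add: sum.union_disjoint)
    have "(\<Sum>x\<in>B. f x *s x) \<in> W"
      using BW by (intro subspace_sum[OF sW] subspace_scale[OF sW]) auto
    moreover have "(\<Sum>x\<in>T. f x *s x) = - (\<Sum>x\<in>B. f x *s x)"
      using sum0 split by (simp add: eq_neg_iff_add_eq_0 add.commute)
    ultimately have "(\<Sum>x\<in>T. f x *s x) \<in> W"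
      using subspace_neg[OF sW] by simp
    then have fT0: "\<forall>x\<in>T. f x = 0" by (rule ind)
    with sum0 split have "(\<Sum>x\<in>B. f x *s x) = 0" by simp
    then have "\<forall>x\<in>B. f x = 0" using independentD[OF iB fB] by blast
    with fT0 x show "f x = 0" by blast
  qed
qed

lemma (in vector_space) dim_eq_dim_plus_card:
  assumes sW: "subspace W" and WV: "W \<subseteq> V"
    and fT: "finite T" and TV: "T \<subseteq> V" and sp: "V \<subseteq> span (W \<union> T)"
    and ind: "\<And>c. (\<Sum>x\<in>T. c x *s x) \<in> W \<Longrightarrow> \<forall>x\<in>T. c x = 0"
    and fd: "finite F" "V \<subseteq> span F"
  shows "dim V = dim W + card T"
proof -
  obtain B where B: "B \<subseteq> W" "independent B" "W \<subseteq> span B" "card B = dim W"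
    by (rule basis_exists)
  have fB: "finite B"
    using independent_span_bound[OF fd(1) B(2)] B(1) WV fd(2) by blast
  note BT = independent_Un_independent_mod[OF sW B(1,2) fB fT ind]
  have "V \<subseteq> span (B \<union> T)"
  proof -
    have "W \<union> T \<subseteq> span (B \<union> T)"
      using B(3) span_mono[of B "B \<union> T"] span_superset[of "B \<union> T"] by blast
    with sp show ?thesis by (meson span_minimal subspace_span order_trans)
  qed
  then have "card (B \<union> T) = dim V"
    using B(1) WV TV BT(2) by (intro basis_card_eq_dim) auto
  then show ?thesis using card_Un_disjoint[OF fB fT BT(1)] B(4) by simp
qed

lemma (in vector_space) dim_eq_dim_plus_card_family:
  assumes "subspace W" "W \<subseteq> V" "finite G" "f ` G \<subseteq> V" "V \<subseteq> span (W \<union> f ` G)"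
    and ind: "\<And>c. (\<Sum>g\<in>G. c g *s f g) \<in> W \<Longrightarrow> \<forall>g\<in>G. c g = 0"
    and "finite F" "V \<subseteq> span F"
  shows "dim V = dim W + card G"
proof -
  have inj: "inj_on f G"
  proof
    fix a b assume ab: "a \<in> G" "b \<in> G" "f a = f b"
    define c where "c g = (if g = a then 1 else 0 :: 'a) - (if g = b then 1 else 0)" for g
    have "(\<Sum>g\<in>G. c g *s f g) = f a - f b"
      using ab(1,2) \<open>finite G\<close>
      by (simp add: c_def scale_left_diff_distrib sum_subtractf if_distrib[of "\<lambda>c. c *s _"]
          sum.delta' cong: if_cong)
    then have "(\<Sum>g\<in>G. c g *s f g) \<in> W"
      using ab(3) subspace_0[OF \<open>subspace W\<close>] by simp
    from ind[OF this] ab(1) show "a = b" by (auto simp: c_def split: if_splits)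
  qed
  have "dim V = dim W + card (f ` G)"
  proof (rule dim_eq_dim_plus_card[where F = F])
    fix c assume "(\<Sum>x\<in>f ` G. c x *s x) \<in> W"
    then have "(\<Sum>g\<in>G. c (f g) *s f g) \<in> W" by (simp add: sum.reindex[OF inj])
    from ind[OF this] show "\<forall>x\<in>f ` G. c x = 0" by blast
  qed (use assms in auto)
  then show ?thesis by (simp add: card_image[OF inj])
qed

subsection \<open>Points on a line of type (1,1,0)\<close>

lemma tdeg_100:
  assumes "tdeg m = (1, 0, 0)"
  shows "m = Poly_Mapping.single X0 1 \<or> m = Poly_Mapping.single X1 1"
proof -
  have "m = (\<Sum>v\<in>UNIV. Poly_Mapping.single v (Poly_Mapping.lookup m v))"
    by (rule monomial_eq_sum_singles)
  also have "\<dots> = Poly_Mapping.single X0 (Poly_Mapping.lookup m X0)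
      + Poly_Mapping.single X1 (Poly_Mapping.lookup m X1)"
    using assms by (simp add: UNIV_var tdeg_def)
  finally show ?thesis
    using assms by (auto simp: tdeg_def add_is_1)
qed

lemma tdeg_010:
  assumes "tdeg m = (0, 1, 0)"
  shows "m = Poly_Mapping.single Y0 1 \<or> m = Poly_Mapping.single Y1 1"
proof -
  have "m = (\<Sum>v\<in>UNIV. Poly_Mapping.single v (Poly_Mapping.lookup m v))"
    by (rule monomial_eq_sum_singles)
  also have "\<dots> = Poly_Mapping.single Y0 (Poly_Mapping.lookup m Y0)
      + Poly_Mapping.single Y1 (Poly_Mapping.lookup m Y1)"
    using assms by (simp add: UNIV_var tdeg_def)
  finally show ?thesis
    using assms by (auto simp: tdeg_def add_is_1)
qed

lemma eval_at_binary_form: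
  assumes "Poly_Mapping.keys L \<subseteq> {Poly_Mapping.single u 1, Poly_Mapping.single w 1}" "u \<noteq> w"
  shows "eval_at L P = Poly_Mapping.lookup L (Poly_Mapping.single u 1) * coord P u
    + Poly_Mapping.lookup L (Poly_Mapping.single w 1) * coord P w"
proof -
  have "Poly_Mapping.single u (1::nat) \<noteq> Poly_Mapping.single w 1"
    using assms(2) by (metis lookup_single_eq lookup_single_not_eq zero_neq_one)
  with assms show ?thesis
    by (subst eval_at_superset[of "{Poly_Mapping.single u 1, Poly_Mapping.single w 1}"])
      (simp_all add: monomial_value_single_var)
qed

lemma binary_form_coeff_nonzero:
  assumes "Poly_Mapping.keys L \<subseteq> {a, b}" "L \<noteq> 0"
  shows "Poly_Mapping.lookup L a \<noteq> 0 \<or> Poly_Mapping.lookup L b \<noteq> 0"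
proof -
  obtain x where "x \<in> Poly_Mapping.keys L"
    using assms(2) by fastforce
  with assms(1) show ?thesis by (auto simp: in_keys_iff)
qed

lemma common_zero_cross:
  fixes l0 l1 a0 a1 b0 b1 :: "'k::field"
  assumes "l0 * a0 + l1 * a1 = 0" "l0 * b0 + l1 * b1 = 0" "l0 \<noteq> 0 \<or> l1 \<noteq> 0"
  shows "a0 * b1 = a1 * b0"
proof -
  have "l0 * (a0 * b1 - a1 * b0) = b1 * (l0 * a0 + l1 * a1) - a1 * (l0 * b0 + l1 * b1)"
    and "l1 * (a0 * b1 - a1 * b0) = a0 * (l0 * b0 + l1 * b1) - b0 * (l0 * a0 + l1 * a1)"
    by (simp_all add: algebra_simps)
  with assms show ?thesis by auto
qed

lemma on_line110_cross:
  fixes P Q :: "'k::field pt"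
  assumes "line110 L L'" "on_line L L' P" "on_line L L' Q"
  shows "coord P X0 * coord Q X1 = coord P X1 * coord Q X0"
    and "coord P Y0 * coord Q Y1 = coord P Y1 * coord Q Y0"
proof -
  have L: "Poly_Mapping.keys L \<subseteq> {Poly_Mapping.single X0 1, Poly_Mapping.single X1 1}"
    and L': "Poly_Mapping.keys L' \<subseteq> {Poly_Mapping.single Y0 1, Poly_Mapping.single Y1 1}"
    using assms(1) tdeg_100 tdeg_010 by (auto simp: line110_def Rdeg_def)
  show "coord P X0 * coord Q X1 = coord P X1 * coord Q X0"
    using assms eval_at_binary_form[OF L] binary_form_coeff_nonzero[OF L]
    by (intro common_zero_cross) (auto simp: on_line_def line110_def)
  show "coord P Y0 * coord Q Y1 = coord P Y1 * coord Q Y0"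
    using assms eval_at_binary_form[OF L'] binary_form_coeff_nonzero[OF L']
    by (intro common_zero_cross) (auto simp: on_line_def line110_def)
qed

subsection \<open>Polynomials on a finite set\<close>

lemma poly_eq_sum_monom:
  "degree p < r \<Longrightarrow> p = (\<Sum>g<r. monom (coeff p g) g)"
  by (rule poly_eqI) (auto simp: coeff_sum coeff_monom coeff_eq_0)

lemma coeff_sum_monom: "coeff (\<Sum>g<r. monom (c g) g) n = (if n < r then c n else 0)"
  by (simp add: coeff_sum coeff_monom)

lemma sum_monom_vanishing_on:
  fixes c :: "nat \<Rightarrow> 'k::field"
  assumes "finite A" "0 < r" "r \<le> card A" "\<forall>x\<in>A. poly (\<Sum>g<r. monom (c g) g) x = 0"
  shows "\<forall>g<r. c g = 0"
proof -
  have "degree (\<Sum>g<r. monom (c g) g) < r"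
    using assms(2) by (intro degree_sum_less) (auto intro: le_less_trans[OF degree_monom_le])
  then have "(\<Sum>g<r. monom (c g) g) = 0"
    using assms(3,4) by (intro poly_eqI_degree[where A = A]) auto
  then show ?thesis using coeff_sum_monom[of c r] by (metis coeff_0)
qed

lemma low_degree_interpolant:
  fixes Q :: "'k::field poly"
  assumes "finite A" "A \<noteq> {}" "degree Q \<le> k"
  shows "\<exists>Q'. degree Q' < min (k + 1) (card A) \<and> (\<forall>x\<in>A. poly Q' x = poly Q x)"
proof (cases "k < card A")
  case True
  then show ?thesis using assms(3) by (intro exI[of _ Q]) auto
next
  case False
  define N where "N = (\<Prod>a\<in>A. [:- a, 1:])"
  have "N \<noteq> 0" "degree N = card A"
    unfolding N_def using assms(1) by (auto simp: degree_prod_eq_sum_degree)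
  then have "degree (Q mod N) < card A"
    using degree_mod_less[of N Q] assms(1,2) by (auto simp: card_gt_0_iff)
  moreover have "poly (Q mod N) x = poly Q x" if "x \<in> A" for x
    using that assms(1) by (simp add: N_def poly_prod flip: minus_div_mult_eq_mod)
  ultimately show ?thesis using False by (intro exI[of _ "Q mod N"]) auto
qed

subsection \<open>Points with common first two coordinates\<close>

lemma proportional_to_pivot:
  fixes a0 a1 b0 b1 :: "'k::field"
  assumes "a0 * b1 = a1 * b0" "a0 \<noteq> 0 \<or> a1 \<noteq> 0" "(be, ae) = (b0, a0) \<or> (be, ae) = (b1, a1)"
    and "be \<noteq> 0"
  shows "ae \<noteq> 0 \<and> a0 = b0 / be * ae \<and> a1 = b1 / be * ae"
  using assms(3)
proof
  assume "(be, ae) = (b0, a0)"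
  moreover have "a1 = b1 / b0 * a0" if "b0 \<noteq> 0"
    using assms(1) that by (simp add: field_simps)
  ultimately show ?thesis using assms(2,4) by auto
next
  assume "(be, ae) = (b1, a1)"
  moreover have "a0 = b0 / b1 * a1" if "b1 \<noteq> 0"
    using assms(1) that by (simp add: field_simps)
  ultimately show ?thesis using assms(2,4) by auto
qed

lemma same_pt_iff_cross:
  "same_pt P Q \<longleftrightarrow> coord P X0 * coord Q X1 = coord P X1 * coord Q X0
    \<and> coord P Y0 * coord Q Y1 = coord P Y1 * coord Q Y0
    \<and> coord P Z0 * coord Q Z1 = coord P Z1 * coord Q Z0"
  by (cases P; cases Q) (auto simp: same_pt_def coord_def)

locale common_xy_points =
  fixes X :: "'k::field pt set" and P0 :: "'k pt" and lam :: 'k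
  assumes finite_X: "finite X" and P0_in_X: "P0 \<in> X"
    and valid: "\<forall>P\<in>X. valid_pt P"
    and distinct: "\<forall>P\<in>X. \<forall>Q\<in>X. same_pt P Q \<longrightarrow> P = Q"
    and cross_x: "\<forall>P\<in>X. \<forall>Q\<in>X. coord P X0 * coord Q X1 = coord P X1 * coord Q X0"
    and cross_y: "\<forall>P\<in>X. \<forall>Q\<in>X. coord P Y0 * coord Q Y1 = coord P Y1 * coord Q Y0"
    and chart: "\<forall>P\<in>X. coord P Z1 + lam * coord P Z0 \<noteq> 0"
begin

definition chart_value :: "'k pt \<Rightarrow> 'k" where
  "chart_value P = coord P Z1 + lam * coord P Z0"

definition tau :: "'k pt \<Rightarrow> 'k" where
  "tau P = coord P Z0 / chart_value P"

definition scale :: "'k pt \<Rightarrow> var \<Rightarrow> 'k" where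
  "scale P v =
    (if v \<in> {X0, X1} then coord P (pivot P0 X0)
     else if v \<in> {Y0, Y1} then coord P (pivot P0 Y0) else chart_value P)"

definition coord_poly :: "var \<Rightarrow> 'k poly" where
  "coord_poly v =
    (if v = Z0 then [:0, 1:] else if v = Z1 then [:1, - lam:]
     else [:coord P0 v / coord P0 (pivot P0 v):])"

lemma chart_value_nonzero: "P \<in> X \<Longrightarrow> chart_value P \<noteq> 0"
  using chart by (simp add: chart_value_def)

lemma scale_coord_poly:
  assumes "P \<in> X"
  shows "scale P v \<noteq> 0 \<and> coord P v = scale P v * poly (coord_poly v) (tau P)"
proof -
  have P0: "coord P0 (pivot P0 v) \<noteq> 0" for v
    using coord_pivot_nonzero valid P0_in_X by blast
  have "coord P (pivot P0 X0) \<noteq> 0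
      \<and> coord P X0 = coord P0 X0 / coord P0 (pivot P0 X0) * coord P (pivot P0 X0)
      \<and> coord P X1 = coord P0 X1 / coord P0 (pivot P0 X0) * coord P (pivot P0 X0)"
    using cross_x assms P0_in_X valid_pt_coord[of P] valid P0[of X0]
    by (intro proportional_to_pivot) (auto simp: pivot_def)
  moreover have "coord P (pivot P0 Y0) \<noteq> 0
      \<and> coord P Y0 = coord P0 Y0 / coord P0 (pivot P0 Y0) * coord P (pivot P0 Y0)
      \<and> coord P Y1 = coord P0 Y1 / coord P0 (pivot P0 Y0) * coord P (pivot P0 Y0)"
    using cross_y assms P0_in_X valid_pt_coord[of P] valid P0[of Y0]
    by (intro proportional_to_pivot) (auto simp: pivot_def)
  moreover note chart_value_nonzero[OF assms]
  moreover have "coord P Z1 = chart_value P * (1 - lam * tau P)"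
    using chart_value_nonzero[OF assms] by (simp add: tau_def chart_value_def field_simps)
  ultimately show ?thesis
    by (cases v) (simp_all add: scale_def coord_poly_def tau_def pivot_same_group mult.commute)
qed

definition weight :: "nat \<Rightarrow> nat \<Rightarrow> nat \<Rightarrow> 'k pt \<Rightarrow> 'k" where
  "weight i j k P = coord P (pivot P0 X0) ^ i * coord P (pivot P0 Y0) ^ j * chart_value P ^ k"

definition monomial_poly :: "(var \<Rightarrow>\<^sub>0 nat) \<Rightarrow> 'k poly" where
  "monomial_poly m = (\<Prod>v\<in>UNIV. coord_poly v ^ Poly_Mapping.lookup m v)"

lemma weight_nonzero: "P \<in> X \<Longrightarrow> weight i j k P \<noteq> 0"
  using scale_coord_poly[of P X0] scale_coord_poly[of P Y0] scale_coord_poly[of P Z0]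
  by (simp add: weight_def scale_def)

lemma monomial_value_eq_weight:
  assumes "P \<in> X" "tdeg m = (i, j, k)"
  shows "monomial_value P m = weight i j k P * poly (monomial_poly m) (tau P)"
proof -
  let ?l = "Poly_Mapping.lookup m"
  have "monomial_value P m = (\<Prod>v\<in>UNIV. (scale P v * poly (coord_poly v) (tau P)) ^ ?l v)"
    unfolding monomial_value_def using scale_coord_poly[OF assms(1)] by simp
  also have "\<dots> = (\<Prod>v\<in>UNIV. scale P v ^ ?l v) * poly (monomial_poly m) (tau P)"
    by (simp add: power_mult_distrib prod.distrib monomial_poly_def poly_prod poly_power)
  also have "(\<Prod>v\<in>UNIV. scale P v ^ ?l v) = weight i j k P"
  proof -
    have "i = ?l X0 + ?l X1" "j = ?l Y0 + ?l Y1" "k = ?l Z0 + ?l Z1"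
      using assms(2) by (simp_all add: tdeg_def)
    then show ?thesis by (simp add: UNIV_var scale_def weight_def power_add mult_ac)
  qed
  finally show ?thesis .
qed

lemma degree_monomial_poly:
  assumes "tdeg m = (i, j, k)"
  shows "degree (monomial_poly m) \<le> k"
proof -
  let ?l = "Poly_Mapping.lookup m"
  have "degree (coord_poly v ^ n) \<le> (if v \<in> {Z0, Z1} then n else 0)" for v n
  proof -
    have "degree (coord_poly v ^ n) \<le> degree (coord_poly v) * n"
      by (rule degree_power_le)
    also have "\<dots> \<le> (if v \<in> {Z0, Z1} then 1 else 0) * n"
      using degree_pCons_le[of 1 "[:- lam:]"] by (intro mult_le_mono1) (auto simp: coord_poly_def)
    also have "\<dots> = (if v \<in> {Z0, Z1} then n else 0)"
      by simp
    finally show ?thesis .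
  qed
  then have "degree (monomial_poly m) \<le> (\<Sum>v\<in>UNIV. if v \<in> {Z0, Z1} then ?l v else 0)"
    unfolding monomial_poly_def
    by (intro order_trans[OF degree_prod_sum_le] sum_mono) (simp_all add: o_def)
  also have "\<dots> = k"
    using assms by (simp add: UNIV_var tdeg_def)
  finally show ?thesis .
qed

lemma eval_at_Rdeg_eq_weight:
  assumes "p \<in> Rdeg i j k"
  shows "\<exists>Q. degree Q \<le> k \<and> (\<forall>P\<in>X. eval_at p P = weight i j k P * poly Q (tau P))"
proof (intro exI conjI ballI)
  let ?Q = "\<Sum>m\<in>Poly_Mapping.keys p. smult (Poly_Mapping.lookup p m) (monomial_poly m)"
  have tdeg: "m \<in> Poly_Mapping.keys p \<Longrightarrow> tdeg m = (i, j, k)" for m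
    using assms by (simp add: Rdeg_def)
  show "degree ?Q \<le> k"
    by (intro degree_sum_le order_trans[OF degree_smult_le])
      (auto intro: degree_monomial_poly[OF tdeg])
  show "eval_at p P = weight i j k P * poly ?Q (tau P)" if "P \<in> X" for P
    using that tdeg
    by (simp add: eval_at_eq_monomial_value monomial_value_eq_weight poly_sum sum_distrib_left
        mult_ac cong: sum.cong)
qed

definition chart_monomial :: "nat \<Rightarrow> nat \<Rightarrow> nat \<Rightarrow> nat \<Rightarrow> 'k mpoly" where
  "chart_monomial i j k g =
    Var (pivot P0 X0) ^ i * Var (pivot P0 Y0) ^ j * Var Z0 ^ g
      * (Var Z1 + Const lam * Var Z0) ^ (k - g)"

lemma chart_monomial_Rdeg:
  assumes "g \<le> k"
  shows "chart_monomial i j k g \<in> Rdeg i j k"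
proof -
  have "pivot P0 X0 \<in> {X0, X1}" "pivot P0 Y0 \<in> {Y0, Y1}"
    by (simp_all add: pivot_def)
  then have x: "Var (pivot P0 X0) \<in> Rdeg 1 0 0" and y: "Var (pivot P0 Y0) \<in> Rdeg 0 1 0"
    by (metis insertE singletonD Rdeg_Var(1,2), metis insertE singletonD Rdeg_Var(3,4))
  have z: "Var Z1 + Const lam * Var Z0 \<in> Rdeg 0 0 1"
    using Rdeg_add[OF Rdeg_Var(6) Rdeg_mscale[OF Rdeg_Var(5)]] by (simp add: mscale_eq_Const_mult)
  have "Var (pivot P0 X0) ^ i \<in> Rdeg i 0 0" "Var (pivot P0 Y0) ^ j \<in> Rdeg 0 j 0"
    "Var Z0 ^ g \<in> Rdeg 0 0 g" "(Var Z1 + Const lam * Var Z0) ^ (k - g) \<in> Rdeg 0 0 (k - g)"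
    using Rdeg_power[OF x, of i] Rdeg_power[OF y, of j] Rdeg_power[OF Rdeg_Var(5), of g]
      Rdeg_power[OF z, of "k - g"]
    by simp_all
  then have "chart_monomial i j k g \<in> Rdeg (i + 0 + 0 + 0) (0 + j + 0 + 0) (0 + 0 + g + (k - g))"
    unfolding chart_monomial_def by (intro Rdeg_mult)
  with assms show ?thesis by simp
qed

lemma eval_at_chart_monomial:
  assumes "P \<in> X" "g \<le> k"
  shows "eval_at (chart_monomial i j k g) P = weight i j k P * tau P ^ g"
proof -
  have "coord P Z0 ^ g * chart_value P ^ (k - g) = chart_value P ^ k * tau P ^ g"
    using assms chart_value_nonzero by (simp add: tau_def power_divide power_diff)
  then show ?thesis
    by (simp add: chart_monomial_def weight_def eval_at_mult eval_at_power eval_at_add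
        chart_value_def mult_ac)
qed

lemma eval_at_chart_combination:
  assumes "P \<in> X" "r \<le> k + 1"
  shows "eval_at (\<Sum>g<r. mscale (c g) (chart_monomial i j k g)) P
    = weight i j k P * poly (\<Sum>g<r. monom (c g) g) (tau P)"
proof -
  have "eval_at (\<Sum>g<r. mscale (c g) (chart_monomial i j k g)) P
      = (\<Sum>g<r. c g * (weight i j k P * tau P ^ g))"
    unfolding eval_at_sum eval_at_mscale
    by (rule sum.cong) (use assms in \<open>simp_all add: eval_at_chart_monomial\<close>)
  then show ?thesis
    by (simp add: poly_sum poly_monom sum_distrib_left mult_ac)
qed

lemma inj_on_tau: "inj_on tau X"
proof
  fix P Q assume P: "P \<in> X" and Q: "Q \<in> X" and "tau P = tau Q"
  with chart_value_nonzero[OF P] chart_value_nonzero[OF Q] have "coord P Z0 * chart_value Q = coord Q Z0 * chart_value P"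
    by (simp add: tau_def field_simps)
  then have "coord P Z0 * coord Q Z1 = coord P Z1 * coord Q Z0"
    by (simp add: chart_value_def algebra_simps)
  then have "same_pt P Q"
    using cross_x cross_y P Q by (simp add: same_pt_iff_cross)
  then show "P = Q" using distinct P Q by blast
qed

lemma card_tau_image: "card (tau ` X) = card X"
  using card_image[OF inj_on_tau] .

lemma chart_combination_in_ideal_pts_iff:
  assumes "r \<le> k + 1"
  shows "(\<Sum>g<r. mscale (c g) (chart_monomial i j k g)) \<in> ideal_pts X
    \<longleftrightarrow> (\<forall>x\<in>tau ` X. poly (\<Sum>g<r. monom (c g) g) x = 0)"
proof -
  have "(\<Sum>g<r. mscale (c g) (chart_monomial i j k g)) \<in> Rdeg i j k"
    using assms
    by (intro mpoly.subspace_sum[OF subspace_Rdeg] mpoly.subspace_scale[OF subspace_Rdeg]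
        chart_monomial_Rdeg) auto
  then show ?thesis
    using assms valid weight_nonzero
    by (simp add: ideal_pts_Rdeg_iff eval_at_chart_combination)
qed

lemma chart_monomials_independent_mod_ideal:
  assumes "(\<Sum>g<min (k + 1) (card X). mscale (c g) (chart_monomial i j k g)) \<in> ideal_pts X"
  shows "\<forall>g<min (k + 1) (card X). c g = 0"
proof (rule sum_monom_vanishing_on[where A = "tau ` X"])
  show "\<forall>x\<in>tau ` X. poly (\<Sum>g<min (k + 1) (card X). monom (c g) g) x = 0"
    using assms chart_combination_in_ideal_pts_iff[of "min (k + 1) (card X)"] by simp
  show "0 < min (k + 1) (card X)"
    using finite_X P0_in_X by (auto simp: card_gt_0_iff)
qed (simp_all add: finite_X card_tau_image)

lemma Rdeg_subset_span_chart_monomials: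
  "Rdeg i j k
    \<subseteq> mpoly.span (ideal_pts X \<inter> Rdeg i j k \<union> chart_monomial i j k ` {..<min (k + 1) (card X)})"
  (is "_ \<subseteq> mpoly.span (?W \<union> ?T)")
proof
  fix p :: "'k mpoly"
  assume p: "p \<in> Rdeg i j k"
  let ?r = "min (k + 1) (card X)"
  obtain Q where "degree Q \<le> k" and Q: "\<forall>P\<in>X. eval_at p P = weight i j k P * poly Q (tau P)"
    using eval_at_Rdeg_eq_weight[OF p] by blast
  then obtain Q' where "degree Q' < ?r" and Q': "\<forall>x\<in>tau ` X. poly Q' x = poly Q x"
    using low_degree_interpolant[of "tau ` X" Q k] finite_X P0_in_X by (auto simp: card_tau_image)
  define q where "q = (\<Sum>g<?r. mscale (coeff Q' g) (chart_monomial i j k g))"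
  have q: "q \<in> Rdeg i j k"
    unfolding q_def
    by (intro mpoly.subspace_sum[OF subspace_Rdeg] mpoly.subspace_scale[OF subspace_Rdeg]
        chart_monomial_Rdeg) auto
  have "eval_at q P = eval_at p P" if "P \<in> X" for P
    using that Q Q' eval_at_chart_combination[OF that, of ?r k]
      poly_eq_sum_monom[OF \<open>degree Q' < ?r\<close>, symmetric]
    by (simp add: q_def)
  moreover have pq: "p - q \<in> Rdeg i j k"
    using p q by (rule mpoly.subspace_diff[OF subspace_Rdeg])
  ultimately have "p - q \<in> ?W"
    by (simp add: ideal_pts_Rdeg_iff[OF valid pq] eval_at_diff)
  moreover have "q \<in> mpoly.span ?T"
    unfolding q_def by (intro mpoly.span_sum mpoly.span_scale mpoly.span_base) auto
  ultimately have "(p - q) + q \<in> mpoly.span (?W \<union> ?T)"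
    by (intro mpoly.span_add) (auto intro: mpoly.span_base mpoly.span_mono[THEN subsetD])
  then show "p \<in> mpoly.span (?W \<union> ?T)" by simp
qed

theorem dim_Rdeg_eq:
  "mpoly.dim (Rdeg i j k :: 'k mpoly set)
    = mpoly.dim (ideal_pts X \<inter> Rdeg i j k) + min (k + 1) (card X)"
proof -
  obtain F :: "'k mpoly set" where F: "finite F" "Rdeg i j k \<subseteq> mpoly.span F"
    using finite_dimensional_Rdeg by blast
  have "mpoly.dim (Rdeg i j k :: 'k mpoly set)
      = mpoly.dim (ideal_pts X \<inter> Rdeg i j k) + card {..<min (k + 1) (card X)}"
  proof (rule mpoly.dim_eq_dim_plus_card_family[where F = F])
    show "mpoly.subspace (ideal_pts X \<inter> Rdeg i j k)"
      by (intro mpoly.subspace_inter subspace_ideal_pts subspace_Rdeg)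
    show "chart_monomial i j k ` {..<min (k + 1) (card X)} \<subseteq> Rdeg i j k"
      by (auto intro: chart_monomial_Rdeg)
  qed (use F Rdeg_subset_span_chart_monomials chart_monomials_independent_mod_ideal in auto)
  then show ?thesis by simp
qed

end

lemma exists_chart_parameter:
  fixes X :: "'k::field_char_0 pt set"
  assumes "finite X" "\<forall>P\<in>X. valid_pt P"
  shows "\<exists>lam. \<forall>P\<in>X. coord P Z1 + lam * coord P Z0 \<noteq> 0"
proof -
  obtain lam :: 'k where lam: "lam \<notin> (\<lambda>P. - coord P Z1 / coord P Z0) ` X"
    using ex_new_if_finite[OF infinite_UNIV_char_0 finite_imageI[OF assms(1)]] by blast
  have "coord P Z1 + lam * coord P Z0 \<noteq> 0" if "P \<in> X" for P
  proof (cases "coord P Z0 = 0")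
    case True
    then show ?thesis using valid_pt_coord[of P] assms(2) that by auto
  next
    case False
    show ?thesis
    proof
      assume "coord P Z1 + lam * coord P Z0 = 0"
      then have "lam = - coord P Z1 / coord P Z0"
        using False by (simp add: field_simps add_eq_0_iff)
      then show False using lam that by blast
    qed
  qed
  then show ?thesis by blast
qed

theorem lemma2p6:
  fixes X :: "'k::{alg_closed_field, field_char_0} pt set"
    and L L' :: "'k mpoly"
    and s :: nat
  assumes "line110 L L'"
    and "finite X"
    and "\<forall>P \<in> X. valid_pt P"
    and "\<forall>P \<in> X. \<forall>Q \<in> X. same_pt P Q \<longrightarrow> P = Q"
    and "\<forall>P \<in> X. on_line L L' P"
    and "card X = s"
  shows "\<forall>i j k. hilb X i j k = min (k + 1) s"
proof (intro allI)
  fix i j k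
  show "hilb X i j k = min (k + 1) s"
  proof (cases "X = {}")
    case True
    then show ?thesis using assms(6) by (simp add: hilb_def ideal_pts_def)
  next
    case False
    then obtain P0 where "P0 \<in> X" by blast
    moreover obtain lam where "\<forall>P\<in>X. coord P Z1 + lam * coord P Z0 \<noteq> 0"
      using exists_chart_parameter assms(2,3) by blast
    ultimately interpret common_xy_points X P0 lam
      using assms(1-5) on_line110_cross[OF assms(1)] by unfold_locales auto
    show ?thesis
      unfolding hilb_def dim_Rdeg_eq assms(6) by simp
  qed
qed

end
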